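(* For each integer $d\ge 2$ define $$\alpha_d \;=\; \inf_{-\frac{1}{d-1}\le \gamma<\frac{1}{d+1}} \frac{1-\frac{F^*(d^2-1,\gamma)}{(d-1)^2}}{1-(d+1)\gamma}.$$ Then (i) $\alpha_d>\frac12\left(1-\frac1d\right)$ for every integer $d\ge 2$, and (ii) $\alpha_d-\frac12\left(1-\frac1d\right)\sim \frac{1}{2d^3}$ as $d\to\infty$, i.e. $\lim_{d\to\infty} 2d^3\left(\alpha_d-\frac12(1-\frac1d)\right)=1$.
   Context: For an integer $k\ge1$ and $\gamma\in[-1,1]$, $$F^*(k,\gamma)=\frac{2\gamma}{k}\left(\frac{\Gamma((k+1)/2)}{\Gamma(k/2)}\right)^2 {}_2F_1\!\left(\tfrac12,\tfrac12;\tfrac k2+1;\gamma^2\right),$$ where ${}_2F_1(a,b;c;z)=\sum_{n\ge0}\frac{(a)_n(b)_n}{(c)_n}\frac{z^n}{n!}$ is the Gaussian hypergeometric function and $(x)_n=\prod_{j=0}^{n-1}(x+j)$. (Equivalently, $F^*(k,\gamma)=\mathbb E\left\langle \frac{Zu}{\|Zu\|},\frac{Zv}{\|Zv\|}\right\rangle$ for unit vectors $u,v$ with $\langle u,v\rangle=\gamma$ and $Z$ a $k\times n$ matrix with i.i.d. standard Gaussian entries.) *)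

theory Defs
  imports "HOL-Analysis.Analysis"
begin

definition hyp2F1 :: "real \<Rightarrow> real \<Rightarrow> real \<Rightarrow> real \<Rightarrow> real" where
  "hyp2F1 a b c z =
     (\<Sum>n. pochhammer a n * pochhammer b n / pochhammer c n * z ^ n / fact n)"

definition Fstar :: "nat \<Rightarrow> real \<Rightarrow> real" where
  "Fstar k \<gamma> = 2 * \<gamma> / real k * (Gamma ((real k + 1) / 2) / Gamma (real k / 2))\<^sup>2
      * hyp2F1 (1/2) (1/2) (real k / 2 + 1) (\<gamma>\<^sup>2)"

definition alpha :: "nat \<Rightarrow> real" where
  "alpha d = (INF \<gamma>\<in>{-1 / (real d - 1)..<1 / (real d + 1)}.
      (1 - Fstar (d\<^sup>2 - 1) \<gamma> / (real d - 1)\<^sup>2) / (1 - (real d + 1) * \<gamma>))"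

end

theory Submission
  imports Defs "HOL-Real_Asymp.Real_Asymp"
begin

text \<open>Write \<open>F\<^sup>*(k,\<gamma>) = \<kappa>\<^sub>k H\<^sub>k(\<gamma>\<^sup>2) \<gamma>\<close> with \<open>H\<^sub>k = \<^sub>2F\<^sub>1(1/2,1/2;k/2+1;\<cdot>)\<close>.
  Log-convexity of \<open>\<Gamma>\<close> pins the constant \<open>\<kappa>\<^sub>k\<close> between \<open>k/(k+1)\<close> and \<open>1\<close>, and comparing
  the series termwise gives \<open>1 \<le> H\<^sub>k(z) \<le> 1/(1-z)\<close>. For \<open>\<gamma> \<le> 0\<close> the lower bounds turn the
  objective into a quotient of affine functions of \<open>|\<gamma>|\<close> that decreases towards the endpoint
  \<open>\<gamma> = -1/(d-1)\<close>, where it equals \<open>(d-1)/(2d) + (d+1)/(2d\<^sup>3(d-1))\<close>; for \<open>\<gamma> > 0\<close> the objective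
  exceeds \<open>1/2\<close>. Evaluating the objective at that endpoint with the upper bounds gives
  \<open>\<alpha>\<^sub>d \<le> (d-1)/(2d) + 1/(2d\<^sup>2(d-2))\<close>. Both bounds are \<open>(1-1/d)/2 + 1/(2d\<^sup>3) + O(d\<^sup>-\<^sup>4)\<close>.\<close>

lemma pochhammer_mono_left:
  assumes "0 \<le> a" "a \<le> (b::real)"
  shows "pochhammer a n \<le> pochhammer b n"
proof (induction n)
  case (Suc n)
  have "0 \<le> pochhammer a n"
    using assms by (auto simp: pochhammer_prod intro!: prod_nonneg)
  then have "pochhammer a n * (a + real n) \<le> pochhammer b n * (b + real n)"
    using Suc assms by (intro mult_mono) auto
  then show ?case by (simp add: pochhammer_Suc)
qed simp

lemma pochhammer_half_div_five_halves:
  "pochhammer (1/2) n / pochhammer (5/2) n = 3 / ((2 * real n + 1) * (2 * real n + 3))"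
proof -
  have "pochhammer (1/2::real) n * pochhammer (1/2 + real n) 2 = pochhammer (1/2) 2 * pochhammer (5/2) n"
    using pochhammer_product'[of "1/2::real" n 2] pochhammer_product'[of "1/2::real" 2 n]
    by (simp add: add.commute)
  then have "pochhammer (1/2) n * ((2 * real n + 1) * (2 * real n + 3)) = 3 * pochhammer (5/2) n"
    by (simp add: numeral_2_eq_2 pochhammer_Suc algebra_simps)
  moreover have "0 < pochhammer (5/2::real) n" "0 < (2 * real n + 1) * (2 * real n + 3)"
    by (simp_all add: pochhammer_pos)
  ultimately show ?thesis
    by (simp add: field_simps)
qed

definition hyp2F1_term :: "real \<Rightarrow> real \<Rightarrow> real \<Rightarrow> real \<Rightarrow> nat \<Rightarrow> real" where
  "hyp2F1_term a b c z n = pochhammer a n * pochhammer b n / pochhammer c n * z ^ n / fact n"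

lemma hyp2F1_eq_suminf: "hyp2F1 a b c z = suminf (hyp2F1_term a b c z)"
  unfolding hyp2F1_def hyp2F1_term_def ..

lemma hyp2F1_half_half_term_bounds:
  assumes "1/2 \<le> c" "0 \<le> z"
  shows "0 \<le> hyp2F1_term (1/2) (1/2) c z n"
    and "hyp2F1_term (1/2) (1/2) c z n \<le> pochhammer (1/2) n / pochhammer c n * z ^ n"
proof -
  have p: "0 \<le> pochhammer (1/2::real) n" "0 < pochhammer c n"
    using assms by (auto simp: pochhammer_nonneg pochhammer_pos)
  have "pochhammer (1/2) n \<le> (fact n :: real)"
    unfolding pochhammer_fact by (rule pochhammer_mono_left) auto
  then have f: "pochhammer (1/2) n / fact n \<le> (1::real)" by simp
  have eq: "hyp2F1_term (1/2) (1/2) c z n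
      = pochhammer (1/2) n / fact n * (pochhammer (1/2) n / pochhammer c n * z ^ n)"
    unfolding hyp2F1_term_def by (simp add: mult_ac)
  show "0 \<le> hyp2F1_term (1/2) (1/2) c z n" unfolding eq using p assms by simp
  show "hyp2F1_term (1/2) (1/2) c z n \<le> pochhammer (1/2) n / pochhammer c n * z ^ n"
    unfolding eq using mult_right_mono[OF f, of "pochhammer (1/2) n / pochhammer c n * z ^ n"] p assms
    by simp
qed

lemma hyp2F1_half_half_term_le_power:
  assumes "1/2 \<le> c" "0 \<le> z"
  shows "hyp2F1_term (1/2) (1/2) c z n \<le> z ^ n"
proof -
  have "pochhammer (1/2) n / pochhammer c n \<le> (1::real)"
    using pochhammer_mono_left[of "1/2" c n] assms by (simp add: pochhammer_pos)
  then have "pochhammer (1/2) n / pochhammer c n * z ^ n \<le> 1 * z ^ n"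
    using assms by (intro mult_right_mono) auto
  then show ?thesis using hyp2F1_half_half_term_bounds(2)[OF assms, of n] by linarith
qed

lemma three_div_odd_product_le:
  "3 / ((2 * real n + 1) * (2 * real n + 3)) \<le> 3 * inverse (real (Suc n) ^ 2)"
proof -
  have "real (Suc n) ^ 2 \<le> (2 * real n + 1) * (2 * real n + 3)"
    by (simp add: power2_eq_square algebra_simps)
  then have "inverse ((2 * real n + 1) * (2 * real n + 3)) \<le> inverse (real (Suc n) ^ 2)"
    by (rule le_imp_inverse_le) simp
  then show ?thesis
    by (simp add: divide_inverse)
qed

text \<open>For \<open>c \<ge> 5/2\<close> the terms are dominated by \<open>(1/2)\<^sub>n / (5/2)\<^sub>n = O(n\<^sup>-\<^sup>2)\<close>, so the series
  converges even at \<open>z = 1\<close>, which is reached by \<open>\<gamma> = -1\<close> when \<open>d = 2\<close>.\<close>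
lemma summable_hyp2F1_half_half:
  assumes "5/2 \<le> c" "0 \<le> z" "z \<le> 1"
  shows "summable (hyp2F1_term (1/2) (1/2) c z)"
proof (rule summable_comparison_test'[where N = 0])
  have "summable (\<lambda>n. inverse (real (Suc n) ^ 2))"
    using inverse_power_summable[of 2, where 'a = real]
    by (subst summable_Suc_iff[of "\<lambda>n. inverse (real n ^ 2)"]) simp
  then show "summable (\<lambda>n. 3 * inverse (real (Suc n) ^ 2))" by (rule summable_mult)
next
  fix n
  have p: "0 \<le> pochhammer (1/2::real) n" "0 < pochhammer (5/2::real) n"
    by (simp_all add: pochhammer_nonneg pochhammer_pos)
  have "pochhammer (1/2) n / pochhammer c n \<le> pochhammer (1/2) n / pochhammer (5/2) n"
    using p pochhammer_mono_left[of "5/2" c n] assms(1) by (intro divide_left_mono) auto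
  moreover have "z ^ n \<le> 1" using assms by (simp add: power_le_one)
  ultimately have "pochhammer (1/2) n / pochhammer c n * z ^ n
      \<le> pochhammer (1/2) n / pochhammer (5/2) n * 1"
    using p assms by (intro mult_mono) auto
  then have "hyp2F1_term (1/2) (1/2) c z n \<le> 3 * inverse (real (Suc n) ^ 2)"
    using hyp2F1_half_half_term_bounds(2)[of c z n] assms three_div_odd_product_le[of n]
    unfolding pochhammer_half_div_five_halves by linarith
  then show "norm (hyp2F1_term (1/2) (1/2) c z n) \<le> 3 * inverse (real (Suc n) ^ 2)"
    using hyp2F1_half_half_term_bounds(1)[of c z n] assms by simp
qed

lemma hyp2F1_half_half_ge_one:
  assumes "5/2 \<le> c" "0 \<le> z" "z \<le> 1"
  shows "1 \<le> hyp2F1 (1/2) (1/2) c z"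
proof -
  have sm: "summable (hyp2F1_term (1/2) (1/2) c z)"
    using summable_hyp2F1_half_half[OF assms] .
  have "0 \<le> (\<Sum>n. hyp2F1_term (1/2) (1/2) c z (Suc n))"
    using sm assms hyp2F1_half_half_term_bounds(1)
    by (intro suminf_nonneg) (auto simp: summable_Suc_iff)
  moreover have "hyp2F1_term (1/2) (1/2) c z 0 = 1"
    unfolding hyp2F1_term_def by simp
  ultimately show ?thesis
    unfolding hyp2F1_eq_suminf suminf_split_head[OF sm] by simp
qed

lemma hyp2F1_half_half_le:
  assumes "1/2 \<le> c" "0 \<le> z" "z < 1"
  shows "hyp2F1 (1/2) (1/2) c z \<le> 1 / (1 - z)"
proof -
  have geom: "(\<lambda>n. z ^ n) sums (1 / (1 - z))"
    using geometric_sums[of z] assms by simp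
  have "summable (hyp2F1_term (1/2) (1/2) c z)"
    using hyp2F1_half_half_term_bounds(1) hyp2F1_half_half_term_le_power assms
    by (intro summable_comparison_test'[OF sums_summable[OF geom], where N = 0]) auto
  then have "suminf (hyp2F1_term (1/2) (1/2) c z) \<le> (\<Sum>n. z ^ n)"
    using hyp2F1_half_half_term_le_power assms sums_summable[OF geom] by (intro suminf_le) auto
  then show ?thesis
    unfolding hyp2F1_eq_suminf sums_unique[OF geom, symmetric] .
qed

lemma Gamma_plus_half_sq_le:
  assumes a: "0 < (a::real)"
  shows "(Gamma (a + 1/2))\<^sup>2 \<le> Gamma a * Gamma (a + 1)"
proof -
  have "(ln \<circ> Gamma) ((1 - 1/2) *\<^sub>R a + (1/2) *\<^sub>R (a + 1))
      \<le> (1 - 1/2) * (ln \<circ> Gamma) a + (1/2) * (ln \<circ> Gamma) (a + 1)"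
    by (rule convex_onD[OF log_convex_Gamma_real]) (use a in auto)
  moreover have "(1 - 1/2) *\<^sub>R a + (1/2) *\<^sub>R (a + 1) = a + 1/2"
    by (simp add: field_simps)
  ultimately have "2 * ln (Gamma (a + 1/2)) \<le> ln (Gamma a) + ln (Gamma (a + 1))"
    by (simp add: algebra_simps)
  then have "exp (2 * ln (Gamma (a + 1/2))) \<le> exp (ln (Gamma a) + ln (Gamma (a + 1)))"
    by simp
  moreover have "0 < Gamma (a + 1/2)" "0 < Gamma a" "0 < Gamma (a + 1)"
    using a by auto
  ultimately show ?thesis
    by (simp only: mult_2 exp_add exp_ln power2_eq_square)
qed

lemma Gamma_plus_one_real: "0 < (a::real) \<Longrightarrow> Gamma (a + 1) = a * Gamma a"
  by (rule Gamma_plus1) (auto dest: nonpos_Ints_nonpos)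

lemma Gamma_plus_half_ratio_bounds:
  assumes a: "0 < (a::real)"
  shows "a\<^sup>2 / (a + 1/2) \<le> (Gamma (a + 1/2) / Gamma a)\<^sup>2"
    and "(Gamma (a + 1/2) / Gamma a)\<^sup>2 \<le> a"
proof -
  have pos: "0 < Gamma a" "0 < Gamma (a + 1/2)" "0 < a + 1/2" using a by auto
  have "(Gamma (a + 1/2))\<^sup>2 \<le> a * (Gamma a)\<^sup>2"
    using Gamma_plus_half_sq_le[OF a] Gamma_plus_one_real[OF a] by (simp add: power2_eq_square mult_ac)
  then show "(Gamma (a + 1/2) / Gamma a)\<^sup>2 \<le> a"
    using pos by (simp add: power_divide divide_le_eq)
  have "(Gamma (a + 1/2 + 1/2))\<^sup>2 \<le> Gamma (a + 1/2) * Gamma (a + 1/2 + 1)"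
    by (rule Gamma_plus_half_sq_le[OF pos(3)])
  moreover have "a + 1/2 + 1/2 = a + 1" by simp
  ultimately have "(a * Gamma a)\<^sup>2 \<le> Gamma (a + 1/2) * ((a + 1/2) * Gamma (a + 1/2))"
    by (simp only: Gamma_plus_one_real[OF a] Gamma_plus_one_real[OF pos(3)])
  then have "a\<^sup>2 * (Gamma a)\<^sup>2 \<le> (a + 1/2) * (Gamma (a + 1/2))\<^sup>2"
    by (simp add: power2_eq_square mult_ac)
  then show "a\<^sup>2 / (a + 1/2) \<le> (Gamma (a + 1/2) / Gamma a)\<^sup>2"
    using pos by (simp add: power_divide divide_le_eq le_divide_eq mult_ac)
qed

definition Fstar_const :: "nat \<Rightarrow> real" where
  "Fstar_const k = 2 / real k * (Gamma ((real k + 1) / 2) / Gamma (real k / 2))\<^sup>2"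

definition Fstar_slope :: "nat \<Rightarrow> real \<Rightarrow> real" where
  "Fstar_slope k \<gamma> = Fstar_const k * hyp2F1 (1/2) (1/2) (real k / 2 + 1) (\<gamma>\<^sup>2)"

lemma Fstar_eq_slope: "Fstar k \<gamma> = Fstar_slope k \<gamma> * \<gamma>"
  unfolding Fstar_def Fstar_slope_def Fstar_const_def by (simp add: mult_ac)

lemma Fstar_const_bounds:
  assumes "1 \<le> k"
  shows "real k / (real k + 1) \<le> Fstar_const k" and "Fstar_const k \<le> 1"
proof -
  define a where "a = real k / 2"
  have a: "0 < a" "Fstar_const k = (Gamma (a + 1/2) / Gamma a)\<^sup>2 / a"
    using assms unfolding a_def Fstar_const_def by (auto simp: add_divide_distrib)
  have "a\<^sup>2 / (a + 1/2) / a = a / (a + 1/2)"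
    using a(1) by (simp add: power2_eq_square)
  also have "\<dots> = real k / (real k + 1)"
    unfolding a_def by (simp add: field_simps)
  finally have "real k / (real k + 1) = a\<^sup>2 / (a + 1/2) / a" ..
  also have "\<dots> \<le> (Gamma (a + 1/2) / Gamma a)\<^sup>2 / a"
    by (rule divide_right_mono[OF Gamma_plus_half_ratio_bounds(1)[OF a(1)]]) (use a(1) in simp)
  finally show "real k / (real k + 1) \<le> Fstar_const k"
    unfolding a(2) .
  show "Fstar_const k \<le> 1"
    unfolding a(2) using Gamma_plus_half_ratio_bounds(2)[OF a(1)] a(1) by simp
qed

lemma Fstar_slope_ge:
  assumes "3 \<le> k" "\<gamma>\<^sup>2 \<le> 1"
  shows "real k / (real k + 1) \<le> Fstar_slope k \<gamma>"
proof -
  have "0 \<le> Fstar_const k" unfolding Fstar_const_def by simp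
  then have "Fstar_const k \<le> Fstar_slope k \<gamma>"
    unfolding Fstar_slope_def using hyp2F1_half_half_ge_one assms
    by (intro mult_le_cancel_left1[THEN iffD2]) auto
  then show ?thesis
    using Fstar_const_bounds(1)[of k] assms by linarith
qed

lemma Fstar_slope_nonneg:
  assumes "3 \<le> k" "\<gamma>\<^sup>2 \<le> 1"
  shows "0 \<le> Fstar_slope k \<gamma>"
  by (rule order_trans[OF _ Fstar_slope_ge[OF assms]]) simp

lemma Fstar_slope_le:
  assumes "3 \<le> k" "\<gamma>\<^sup>2 < 1"
  shows "Fstar_slope k \<gamma> \<le> 1 / (1 - \<gamma>\<^sup>2)"
proof -
  have "1 \<le> hyp2F1 (1/2) (1/2) (real k / 2 + 1) (\<gamma>\<^sup>2)"
    using hyp2F1_half_half_ge_one assms by simp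
  then have "Fstar_slope k \<gamma> \<le> hyp2F1 (1/2) (1/2) (real k / 2 + 1) (\<gamma>\<^sup>2)"
    unfolding Fstar_slope_def using Fstar_const_bounds(2) assms
    by (intro mult_left_le_one_le) (auto simp: Fstar_const_def)
  also have "\<dots> \<le> 1 / (1 - \<gamma>\<^sup>2)"
    using hyp2F1_half_half_le assms by simp
  finally show ?thesis .
qed

lemma divide_affine_antimono:
  fixes a b s t :: real
  assumes "0 \<le> a" "a \<le> b" "0 \<le> t" "t \<le> s"
  shows "(1 + a * s) / (1 + b * s) \<le> (1 + a * t) / (1 + b * t)"
proof -
  have "0 < 1 + b * s" "0 < 1 + b * t" using assms by (auto intro: add_pos_nonneg)
  moreover have "0 \<le> (b - a) * (s - t)" using assms by simp
  then have "(1 + a * s) * (1 + b * t) \<le> (1 + a * t) * (1 + b * s)"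
    by (simp add: algebra_simps)
  ultimately show ?thesis by (simp add: divide_simps)
qed

definition alpha_objective :: "nat \<Rightarrow> real \<Rightarrow> real" where
  "alpha_objective d \<gamma> = (1 - Fstar (d\<^sup>2 - 1) \<gamma> / (real d - 1)\<^sup>2) / (1 - (real d + 1) * \<gamma>)"

lemma alpha_eq_INF:
  "alpha d = (INF \<gamma>\<in>{-1 / (real d - 1)..<1 / (real d + 1)}. alpha_objective d \<gamma>)"
  unfolding alpha_def alpha_objective_def ..

definition alpha_lower :: "nat \<Rightarrow> real" where
  "alpha_lower d = (real d - 1) / (2 * real d) + (real d + 1) / (2 * real d ^ 3 * (real d - 1))"

definition alpha_upper :: "nat \<Rightarrow> real" where
  "alpha_upper d = (real d - 1) / (2 * real d) + 1 / (2 * real d ^ 2 * (real d - 2))"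

lemma alpha_lower_eq:
  assumes "2 \<le> d"
  shows "alpha_lower d = (1 + ((real d)\<^sup>2 - 1) / (real d)\<^sup>2 / (real d - 1)\<^sup>2 * (1 / (real d - 1)))
    / (1 + (real d + 1) * (1 / (real d - 1)))"
proof -
  define D where "D = real d"
  have "D \<noteq> 0" "D - 1 \<noteq> 0" using assms unfolding D_def by auto
  then show ?thesis
    unfolding alpha_lower_def D_def[symmetric] by (simp add: divide_simps) algebra
qed

lemma alpha_upper_eq:
  assumes "3 \<le> d"
  shows "alpha_upper d = (1 + 1 / (1 - (1 / (real d - 1))\<^sup>2) * (1 / (real d - 1)) / (real d - 1)\<^sup>2)
    / (1 + (real d + 1) * (1 / (real d - 1)))"
proof -
  define D where "D = real d"
  have nz: "D \<noteq> 0" "D - 1 \<noteq> 0" "D - 2 \<noteq> 0" using assms unfolding D_def by auto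
  then have "1 - (1 / (D - 1))\<^sup>2 = D * (D - 2) / (D - 1)\<^sup>2"
    by (simp add: divide_simps) algebra
  then show ?thesis
    unfolding alpha_upper_def D_def[symmetric] using nz
    by (simp add: divide_simps) (simp add: algebra_simps power2_eq_square)
qed

lemma alpha_objective_eq:
  "alpha_objective d \<gamma>
    = (1 - Fstar_slope (d\<^sup>2 - 1) \<gamma> * \<gamma> / (real d - 1)\<^sup>2) / (1 - (real d + 1) * \<gamma>)"
  unfolding alpha_objective_def Fstar_eq_slope ..

lemma square_minus_one_bounds:
  assumes "2 \<le> (d::nat)"
  shows "3 \<le> d\<^sup>2 - 1" and "real (d\<^sup>2 - 1) = (real d)\<^sup>2 - 1"
proof -
  have "4 \<le> d\<^sup>2" using power_mono[OF assms, of 2] by simp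
  then show "3 \<le> d\<^sup>2 - 1" "real (d\<^sup>2 - 1) = (real d)\<^sup>2 - 1"
    by (simp_all add: of_nat_diff)
qed

lemma alpha_objective_ge_lower_nonpos:
  assumes d: "2 \<le> d" and \<gamma>: "-1 / (real d - 1) \<le> \<gamma>" "\<gamma> \<le> 0"
  shows "alpha_lower d \<le> alpha_objective d \<gamma>"
proof -
  define D where "D = real d"
  define s where "s = 1 / (D - 1)"
  define t where "t = -\<gamma>"
  define K where "K = Fstar_slope (d\<^sup>2 - 1) \<gamma>"
  define a where "a = (D\<^sup>2 - 1) / D\<^sup>2 / (D - 1)\<^sup>2"
  have D: "2 \<le> D" using d unfolding D_def by simp
  have t: "0 \<le> t" "t \<le> s" using \<gamma> unfolding t_def s_def D_def by auto
  have "s \<le> 1" using D unfolding s_def by simp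
  then have "\<bar>\<gamma>\<bar> \<le> 1" using t unfolding t_def by simp
  then have "\<gamma>\<^sup>2 \<le> 1" by (simp add: abs_square_le_1)
  then have "(D\<^sup>2 - 1) / D\<^sup>2 \<le> K"
    using Fstar_slope_ge[OF square_minus_one_bounds(1)[OF d]] square_minus_one_bounds(2)[OF d]
    unfolding K_def D_def by simp
  then have aK: "a \<le> K / (D - 1)\<^sup>2"
    unfolding a_def by (rule divide_right_mono) simp
  have obj: "alpha_objective d \<gamma> = (1 + K / (D - 1)\<^sup>2 * t) / (1 + (D + 1) * t)"
    unfolding alpha_objective_eq K_def t_def D_def by (simp add: algebra_simps)
  have "(1 + a * t) / (1 + (D + 1) * t) \<le> alpha_objective d \<gamma>"
    unfolding obj
  proof (rule divide_right_mono)
    show "1 + a * t \<le> 1 + K / (D - 1)\<^sup>2 * t" using mult_right_mono[OF aK t(1)] by simp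
  qed (use t D in simp)
  moreover have "(1 + a * s) / (1 + (D + 1) * s) \<le> (1 + a * t) / (1 + (D + 1) * t)"
  proof (rule divide_affine_antimono)
    have "0 \<le> (D\<^sup>2 - 1) / D\<^sup>2" "(D\<^sup>2 - 1) / D\<^sup>2 \<le> 1" "1 \<le> (D - 1)\<^sup>2"
      using D by (simp_all add: one_le_power)
    then have "a \<le> (D\<^sup>2 - 1) / D\<^sup>2 / 1"
      unfolding a_def by (intro divide_left_mono) auto
    then have "a \<le> 1" using \<open>(D\<^sup>2 - 1) / D\<^sup>2 \<le> 1\<close> by simp
    then show "a \<le> D + 1" using D by linarith
  qed (use t D in \<open>auto simp: a_def\<close>)
  moreover have "(1 + a * s) / (1 + (D + 1) * s) = alpha_lower d"
    unfolding alpha_lower_eq[OF d] a_def s_def D_def ..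
  ultimately show ?thesis by linarith
qed

lemma alpha_objective_gt_half_pos:
  assumes d: "2 \<le> d" and \<gamma>: "0 < \<gamma>" "\<gamma> < 1 / (real d + 1)"
  shows "1/2 < alpha_objective d \<gamma>"
proof -
  define D where "D = real d"
  define K where "K = Fstar_slope (d\<^sup>2 - 1) \<gamma>"
  have D: "2 \<le> D" using d unfolding D_def by simp
  have "1 / (D + 1) \<le> 1/3" using D by (simp add: divide_le_eq)
  then have \<gamma>3: "\<gamma> \<le> 1/3" using \<gamma>(2) unfolding D_def by linarith
  then have "\<gamma>\<^sup>2 \<le> (1/3)\<^sup>2" using \<gamma> by (intro power_mono) auto
  then have \<gamma>9: "\<gamma>\<^sup>2 \<le> 1/9" by (simp add: power_divide)
  have "K \<le> 1 / (1 - \<gamma>\<^sup>2)"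
    unfolding K_def using Fstar_slope_le[OF square_minus_one_bounds(1)[OF d]] \<gamma>9 by simp
  also have "\<dots> \<le> 1 / (1 - 1/9)" using \<gamma>9 by (intro divide_left_mono) auto
  finally have "K * \<gamma> \<le> 9/8 * (1/3)"
    using \<gamma> \<gamma>3 by (intro mult_mono) auto
  moreover have K\<gamma>: "0 \<le> K * \<gamma>"
    using Fstar_slope_nonneg[OF square_minus_one_bounds(1)[OF d], of \<gamma>] \<gamma> \<gamma>9
    unfolding K_def by simp
  moreover have "K * \<gamma> / (D - 1)\<^sup>2 \<le> K * \<gamma> / 1"
    using K\<gamma> D by (intro divide_left_mono) (auto simp: one_le_power)
  ultimately have num: "5/8 \<le> 1 - K * \<gamma> / (D - 1)\<^sup>2" by linarith
  have den: "0 < 1 - (D + 1) * \<gamma>" "1 - (D + 1) * \<gamma> \<le> 1"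
    using \<gamma> D unfolding D_def by (simp_all add: less_divide_eq mult.commute)
  have "0 \<le> 1 - K * \<gamma> / (D - 1)\<^sup>2" using num by linarith
  then have "(1 - K * \<gamma> / (D - 1)\<^sup>2) * (1 - (D + 1) * \<gamma>) \<le> 1 - K * \<gamma> / (D - 1)\<^sup>2"
    using mult_left_mono[OF den(2)] by simp
  then have "1 - K * \<gamma> / (D - 1)\<^sup>2 \<le> alpha_objective d \<gamma>"
    unfolding alpha_objective_eq K_def[symmetric] D_def[symmetric]
    using den by (simp add: le_divide_eq)
  then show ?thesis using num by linarith
qed

lemma alpha_lower_le_half:
  assumes "2 \<le> d"
  shows "alpha_lower d \<le> 1/2"
proof -
  define D where "D = real d"
  have D: "2 \<le> D" using assms unfolding D_def by simp
  have "4 * (D - 1) \<le> D\<^sup>2 * (D - 1)"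
    using D mult_mono[OF D D] by (intro mult_right_mono) (auto simp: power2_eq_square)
  moreover have "4 * (D - 1) = 4 * D - 4" by simp
  ultimately have "D + 1 \<le> D\<^sup>2 * (D - 1)" using D by linarith
  then have "(D + 1) / (2 * D ^ 3 * (D - 1)) \<le> D\<^sup>2 * (D - 1) / (2 * D ^ 3 * (D - 1))"
    using D by (intro divide_right_mono) auto
  also have "\<dots> = 1 / (2 * D)"
    using D by (simp add: power2_eq_square power3_eq_cube)
  moreover have "(D - 1) / (2 * D) = 1/2 - 1 / (2 * D)" using D by (simp add: field_simps)
  ultimately show ?thesis
    unfolding alpha_lower_def D_def[symmetric] by linarith
qed

lemma alpha_objective_ge_lower:
  assumes "2 \<le> d" "\<gamma> \<in> {-1 / (real d - 1)..<1 / (real d + 1)}"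
  shows "alpha_lower d \<le> alpha_objective d \<gamma>"
proof (cases "\<gamma> \<le> 0")
  case True
  then show ?thesis using alpha_objective_ge_lower_nonpos assms by simp
next
  case False
  then have "1/2 < alpha_objective d \<gamma>"
    using alpha_objective_gt_half_pos[of d \<gamma>] assms by simp
  then show ?thesis using alpha_lower_le_half[OF assms(1)] by linarith
qed

lemma alpha_objective_left_endpoint_le:
  assumes d: "3 \<le> d"
  shows "alpha_objective d (-1 / (real d - 1)) \<le> alpha_upper d"
proof -
  define D where "D = real d"
  define s where "s = 1 / (D - 1)"
  define K where "K = Fstar_slope (d\<^sup>2 - 1) (-s)"
  have d2: "2 \<le> d" using d by simp
  have D: "3 \<le> D" using d unfolding D_def by simp
  have s: "0 < s" "s \<le> 1/2" using D unfolding s_def by (auto simp: divide_simps)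
  then have "s\<^sup>2 \<le> (1/2)\<^sup>2" by (intro power_mono) auto
  then have s1: "s\<^sup>2 < 1" by (simp add: power_divide)
  have K: "0 \<le> K" "K \<le> 1 / (1 - s\<^sup>2)"
    using Fstar_slope_nonneg[OF square_minus_one_bounds(1)[OF d2], of "-s"]
      Fstar_slope_le[OF square_minus_one_bounds(1)[OF d2], of "-s"] s1
    unfolding K_def by simp_all
  have "K * s / (D - 1)\<^sup>2 \<le> 1 / (1 - s\<^sup>2) * s / (D - 1)\<^sup>2"
    using K s by (intro divide_right_mono mult_right_mono) auto
  then have "(1 + K * s / (D - 1)\<^sup>2) / (1 + (D + 1) * s)
      \<le> (1 + 1 / (1 - s\<^sup>2) * s / (D - 1)\<^sup>2) / (1 + (D + 1) * s)"
    using s D by (intro divide_right_mono) auto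
  also have "\<dots> = alpha_upper d"
    unfolding alpha_upper_eq[OF d] s_def D_def ..
  also have "(1 + K * s / (D - 1)\<^sup>2) / (1 + (D + 1) * s) = alpha_objective d (-s)"
    unfolding alpha_objective_eq K_def D_def by simp
  finally show ?thesis unfolding s_def D_def by simp
qed

lemma alpha_ge_lower:
  assumes "2 \<le> d"
  shows "alpha_lower d \<le> alpha d"
proof -
  have "-1 / (real d - 1) < 0" "0 < 1 / (real d + 1)" using assms by simp_all
  then have "-1 / (real d - 1) < 1 / (real d + 1)" by linarith
  then have "{-1 / (real d - 1)..<1 / (real d + 1)} \<noteq> {}" by simp
  then show ?thesis
    unfolding alpha_eq_INF using alpha_objective_ge_lower[OF assms]
    by (rule cINF_greatest)
qed

lemma alpha_le_upper:
  assumes "3 \<le> d"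
  shows "alpha d \<le> alpha_upper d"
proof -
  have "-1 / (real d - 1) < 0" "0 < 1 / (real d + 1)" using assms by simp_all
  then have "-1 / (real d - 1) < 1 / (real d + 1)" by linarith
  then have "-1 / (real d - 1) \<in> {-1 / (real d - 1)..<1 / (real d + 1)}" by simp
  then have "alpha d \<le> alpha_objective d (-1 / (real d - 1))"
    unfolding alpha_eq_INF using alpha_objective_ge_lower[of d] assms
    by (intro cINF_lower bdd_belowI2) auto
  then show ?thesis using alpha_objective_left_endpoint_le[OF assms] by linarith
qed

lemma alpha_lower_asymp:
  "(\<lambda>d. 2 * (real d)^3 * (alpha_lower d - (1/2) * (1 - 1 / real d))) \<longlonglongrightarrow> 1"
  unfolding alpha_lower_def by real_asymp

lemma alpha_upper_asymp:
  "(\<lambda>d. 2 * (real d)^3 * (alpha_upper d - (1/2) * (1 - 1 / real d))) \<longlonglongrightarrow> 1"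
  unfolding alpha_upper_def by real_asymp

lemma alpha_lower_gt:
  assumes "2 \<le> d"
  shows "(1/2) * (1 - 1 / real d) < alpha_lower d"
proof -
  have "(1/2) * (1 - 1 / real d) = (real d - 1) / (2 * real d)"
    using assms by (simp add: field_simps)
  moreover have "0 < (real d + 1) / (2 * real d ^ 3 * (real d - 1))"
    using assms by simp
  ultimately show ?thesis unfolding alpha_lower_def by linarith
qed

theorem theorem1:
  shows "(\<forall>d::nat. d \<ge> 2 \<longrightarrow> alpha d > (1/2) * (1 - 1 / real d)) \<and>
         ((\<lambda>d::nat. 2 * (real d)^3 * (alpha d - (1/2) * (1 - 1 / real d))) \<longlonglongrightarrow> 1)"
proof
  show "\<forall>d::nat. d \<ge> 2 \<longrightarrow> alpha d > (1/2) * (1 - 1 / real d)"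
    using alpha_lower_gt alpha_ge_lower by (meson less_le_trans)
  show "(\<lambda>d::nat. 2 * (real d)^3 * (alpha d - (1/2) * (1 - 1 / real d))) \<longlonglongrightarrow> 1"
  proof (rule tendsto_sandwich[OF _ _ alpha_lower_asymp alpha_upper_asymp])
    show "\<forall>\<^sub>F d in sequentially. 2 * (real d)^3 * (alpha_lower d - (1/2) * (1 - 1 / real d))
        \<le> 2 * (real d)^3 * (alpha d - (1/2) * (1 - 1 / real d))"
      using eventually_ge_at_top[of 2]
      by eventually_elim (use alpha_ge_lower in \<open>intro mult_left_mono, auto\<close>)
    show "\<forall>\<^sub>F d in sequentially. 2 * (real d)^3 * (alpha d - (1/2) * (1 - 1 / real d))
        \<le> 2 * (real d)^3 * (alpha_upper d - (1/2) * (1 - 1 / real d))"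
      using eventually_ge_at_top[of 3]
      by eventually_elim (use alpha_le_upper in \<open>intro mult_left_mono, auto\<close>)
  qed
qed

end
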